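(* Let ${\bold h}=(h_1,\ldots,h_N)^T\in\mathbb{C}^N$ with $h_n\ne0$ for all $n$, and $P_\text{ant},P_\text{tot}>0$. Consider the problem: maximize $|{\bold h}^T{\bold w}|^2$ over ${\bold w}\in\mathbb{C}^N$ subject to $|w_n|^2\le P_\text{ant}$ for all $n$ and ${\bold w}^H{\bold w}\le P_\text{tot}$. Order the antennas so that $|h_{n(1)}|\le|h_{n(2)}|\le\cdots\le|h_{n(N)}|$, put $\lambda_i=|h_{n(i)}|/(2\sqrt{P_\text{ant}})$ and $P(\lambda_i)=\sum_{l=1}^{i-1}|h_{n(l)}|^2/(2\lambda_i)^2+(N-i+1)P_\text{ant}$ for $i=1,\ldots,N$. Let $i^*$ be the smallest $i\in\{1,\ldots,N\}$ with $P(\lambda_i)\le P_\text{tot}$, and $i^*=N+1$ if there is none. If $i^*=1$ set $x_n=\sqrt{P_\text{ant}}$ for all $n$; otherwise set $$\lambda^*=\frac12\sqrt{\frac{\sum_{l=1}^{i^*-1}|h_{n(l)}|^2}{P_\text{tot}-(N-i^*+1)P_\text{ant}}}\quad\text{and}\quad x_n=\min\{|h_n|/(2\lambda^* ),\sqrt{P_\text{ant}}\}.$$ Then ${\bold w}$ with $w_n=x_n\exp(-j\angle h_n)$, $n=1,\ldots,N$, is an optimal solution. In particular, if $P_\text{tot}\ge NP_\text{ant}$, the vector $w_n=\frac{h_n^*}{|h_n|}\sqrt{P_\text{ant}}$ is optimal, and if $P_\text{tot}\le P_\text{ant}$, the vector $w_n=\frac{h_n^*}{\|{\bold h}\|_2}\sqrt{P_\text{tot}}$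 is optimal.
   Context: $j$ denotes the imaginary unit, $\angle h$ the argument of a complex number $h$, and $h^*$ its complex conjugate. *)

theory Defs
  imports Complex_Main
begin

text \<open>Antennas are indexed by 1..N; vectors are functions nat => complex
  (only the values on 1..N matter).\<close>

definition feasible :: "real \<Rightarrow> real \<Rightarrow> nat \<Rightarrow> (nat \<Rightarrow> complex) \<Rightarrow> bool" where
  "feasible Pant Ptot N w \<longleftrightarrow>
     (\<forall>n\<in>{1..N}. (cmod (w n))\<^sup>2 \<le> Pant) \<and> (\<Sum>n=1..N. (cmod (w n))\<^sup>2) \<le> Ptot"

definition objective :: "nat \<Rightarrow> (nat \<Rightarrow> complex) \<Rightarrow> (nat \<Rightarrow> complex) \<Rightarrow> real" where
  "objective N h w = (cmod (\<Sum>n=1..N. h n * w n))\<^sup>2"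

definition optimal :: "real \<Rightarrow> real \<Rightarrow> nat \<Rightarrow> (nat \<Rightarrow> complex) \<Rightarrow> (nat \<Rightarrow> complex) \<Rightarrow> bool" where
  "optimal Pant Ptot N h w \<longleftrightarrow>
     feasible Pant Ptot N w \<and> (\<forall>v. feasible Pant Ptot N v \<longrightarrow> objective N h v \<le> objective N h w)"

text \<open>sigma is the ordering n(1),...,n(N).\<close>

definition lam :: "real \<Rightarrow> (nat \<Rightarrow> complex) \<Rightarrow> (nat \<Rightarrow> nat) \<Rightarrow> nat \<Rightarrow> real" where
  "lam Pant h \<sigma> i = cmod (h (\<sigma> i)) / (2 * sqrt Pant)"

definition Pfun :: "real \<Rightarrow> nat \<Rightarrow> (nat \<Rightarrow> complex) \<Rightarrow> (nat \<Rightarrow> nat) \<Rightarrow> nat \<Rightarrow> real" where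
  "Pfun Pant N h \<sigma> i =
     (\<Sum>l=1..<i. (cmod (h (\<sigma> l)))\<^sup>2) / (2 * lam Pant h \<sigma> i)\<^sup>2
     + (real N - real i + 1) * Pant"

definition istar :: "real \<Rightarrow> real \<Rightarrow> nat \<Rightarrow> (nat \<Rightarrow> complex) \<Rightarrow> (nat \<Rightarrow> nat) \<Rightarrow> nat" where
  "istar Pant Ptot N h \<sigma> =
     (if \<exists>i\<in>{1..N}. Pfun Pant N h \<sigma> i \<le> Ptot
      then (LEAST i. i \<in> {1..N} \<and> Pfun Pant N h \<sigma> i \<le> Ptot)
      else N + 1)"

definition lamstar :: "real \<Rightarrow> real \<Rightarrow> nat \<Rightarrow> (nat \<Rightarrow> complex) \<Rightarrow> (nat \<Rightarrow> nat) \<Rightarrow> real" where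
  "lamstar Pant Ptot N h \<sigma> =
     (let k = istar Pant Ptot N h \<sigma> in
      sqrt ((\<Sum>l=1..<k. (cmod (h (\<sigma> l)))\<^sup>2) / (Ptot - (real N - real k + 1) * Pant)) / 2)"

definition xopt :: "real \<Rightarrow> real \<Rightarrow> nat \<Rightarrow> (nat \<Rightarrow> complex) \<Rightarrow> (nat \<Rightarrow> nat) \<Rightarrow> nat \<Rightarrow> real" where
  "xopt Pant Ptot N h \<sigma> n =
     (if istar Pant Ptot N h \<sigma> = 1 then sqrt Pant
      else min (cmod (h n) / (2 * lamstar Pant Ptot N h \<sigma>)) (sqrt Pant))"

definition wopt :: "real \<Rightarrow> real \<Rightarrow> nat \<Rightarrow> (nat \<Rightarrow> complex) \<Rightarrow> (nat \<Rightarrow> nat) \<Rightarrow> nat \<Rightarrow> complex" where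
  "wopt Pant Ptot N h \<sigma> n =
     complex_of_real (xopt Pant Ptot N h \<sigma> n) * exp (- \<i> * complex_of_real (Arg (h n)))"

end

theory Submission
  imports Defs
begin

text \<open>
  By the triangle inequality \<open>|h\<^sup>T w| \<le> \<Sum>|h\<^sub>n| |w\<^sub>n|\<close>, with equality when every \<open>w\<^sub>n\<close>
  cancels the phase of \<open>h\<^sub>n\<close>; so only the amplitudes \<open>0 \<le> x\<^sub>n \<le> \<surd>P\<^sub>a\<^sub>n\<^sub>t\<close> with
  \<open>\<Sum> x\<^sub>n\<^sup>2 \<le> P\<^sub>t\<^sub>o\<^sub>t\<close> matter, and the linear objective \<open>\<Sum> |h\<^sub>n| x\<^sub>n\<close> is to be maximized.
  For a multiplier \<open>\<lambda> > 0\<close> the clipped amplitudes \<open>min (|h\<^sub>n|/(2\<lambda>)) \<surd>P\<^sub>a\<^sub>n\<^sub>t\<close> maximize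
  the Lagrangian \<open>\<Sum> (|h\<^sub>n| y\<^sub>n - \<lambda> y\<^sub>n\<^sup>2)\<close> termwise, hence are optimal as soon as they use
  exactly the total power (water-filling). For sorted gains the defining conditions
  \<open>P(\<lambda>\<^sub>i\<^sub>*\<^sub>-\<^sub>1) > P\<^sub>t\<^sub>o\<^sub>t \<ge> P(\<lambda>\<^sub>i\<^sub>*)\<close> of the index \<open>i*\<close> say precisely that at level \<open>\<lambda>*\<close> the
  \<open>i* - 1\<close> weakest antennas stay below the cap and the others are clipped, which makes the
  total power equal to \<open>P\<^sub>t\<^sub>o\<^sub>t\<close>. If \<open>i* = 1\<close>, full power on every antenna is feasible
  and trivially optimal.
\<close>

lemma clipped_lagrange_ineq:
  fixes a x y c l :: real
  assumes "l > 0" "0 \<le> a" "y \<le> c" "x = min (a / (2 * l)) c"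
  shows "a * (y - x) \<le> l * (y\<^sup>2 - x\<^sup>2)"
proof -
  have sq: "0 \<le> l * (y - x)\<^sup>2" using \<open>l > 0\<close> by simp
  show ?thesis
  proof (cases "a / (2 * l) \<le> c")
    case True
    then have "a = 2 * l * x" using assms by (simp add: field_simps)
    then have "l * (y\<^sup>2 - x\<^sup>2) - a * (y - x) = l * (y - x)\<^sup>2"
      by (simp add: power2_eq_square algebra_simps)
    then show ?thesis using sq by linarith
  next
    case False
    then have x: "x = c" and "2 * l * c \<le> a" using assms by (simp_all add: field_simps)
    then have "a * (y - c) \<le> 2 * l * c * (y - c)" using assms(3) by (simp add: mult_right_mono_neg)
    moreover have "l * (y\<^sup>2 - c\<^sup>2) - 2 * l * c * (y - c) = l * (y - c)\<^sup>2"
      by (simp add: power2_eq_square algebra_simps)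
    ultimately show ?thesis using sq unfolding x by linarith
  qed
qed

lemma clipped_maximizes_weighted_sum:
  fixes a x y :: "'i \<Rightarrow> real" and c l :: real
  assumes "l > 0" and "\<forall>n\<in>A. 0 \<le> a n \<and> y n \<le> c \<and> x n = min (a n / (2 * l)) c"
    and "(\<Sum>n\<in>A. (y n)\<^sup>2) \<le> (\<Sum>n\<in>A. (x n)\<^sup>2)"
  shows "(\<Sum>n\<in>A. a n * y n) \<le> (\<Sum>n\<in>A. a n * x n)"
proof -
  have "(\<Sum>n\<in>A. a n * y n) - (\<Sum>n\<in>A. a n * x n) = (\<Sum>n\<in>A. a n * (y n - x n))"
    by (simp add: sum_subtractf algebra_simps)
  also have "\<dots> \<le> (\<Sum>n\<in>A. l * ((y n)\<^sup>2 - (x n)\<^sup>2))"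
    using assms(1,2) by (intro sum_mono clipped_lagrange_ineq) auto
  also have "\<dots> = l * ((\<Sum>n\<in>A. (y n)\<^sup>2) - (\<Sum>n\<in>A. (x n)\<^sup>2))"
    by (simp add: sum_subtractf sum_distrib_left right_diff_distrib)
  also have "\<dots> \<le> 0" using assms(1,3) by (simp add: mult_nonneg_nonpos)
  finally show ?thesis by simp
qed

lemma mult_sqrt_eq_sqrt:
  fixes b q :: real
  assumes "0 \<le> b"
  shows "b * sqrt q = sqrt (b\<^sup>2 * q)"
  using assms by (simp add: real_sqrt_mult)

lemma sum_clipped_sorted:
  fixes b :: "nat \<Rightarrow> real" and \<mu> c :: real
  assumes sorted: "\<forall>i\<in>{1..N}. \<forall>l\<in>{1..N}. i \<le> l \<longrightarrow> b i \<le> b l"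
    and "0 \<le> \<mu>" and j: "1 \<le> j" "j \<le> N"
    and below: "b j * \<mu> \<le> c" and above: "Suc j \<le> N \<Longrightarrow> c \<le> b (Suc j) * \<mu>"
  shows "(\<Sum>l=1..N. (min (b l * \<mu>) c)\<^sup>2) = \<mu>\<^sup>2 * (\<Sum>l=1..j. (b l)\<^sup>2) + real (N - j) * c\<^sup>2"
proof -
  have low: "min (b l * \<mu>) c = b l * \<mu>" if "l \<in> {1..j}" for l
  proof -
    have "b l \<le> b j" using that sorted j by auto
    then have "b l * \<mu> \<le> c" using below \<open>0 \<le> \<mu>\<close> by (meson mult_right_mono order_trans)
    then show ?thesis by simp
  qed
  have high: "min (b l * \<mu>) c = c" if "l \<in> {Suc j..N}" for l
  proof -
    have "b (Suc j) \<le> b l" using that sorted j by auto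
    moreover have "c \<le> b (Suc j) * \<mu>" using that above by simp
    ultimately have "c \<le> b l * \<mu>" using \<open>0 \<le> \<mu>\<close> by (meson mult_right_mono order_trans)
    then show ?thesis by simp
  qed
  have "(\<Sum>l=1..N. (min (b l * \<mu>) c)\<^sup>2)
      = (\<Sum>l=1..j. (min (b l * \<mu>) c)\<^sup>2) + (\<Sum>l=Suc j..N. (min (b l * \<mu>) c)\<^sup>2)"
    using sum.ub_add_nat[of 1 j _ "N - j"] j by simp
  also have "\<dots> = (\<Sum>l=1..j. \<mu>\<^sup>2 * (b l)\<^sup>2) + (\<Sum>l=Suc j..N. c\<^sup>2)"
    using low high by (simp add: power_mult_distrib mult.commute)
  finally show ?thesis by (simp add: sum_distrib_left)
qed

definition phase_aligned :: "nat \<Rightarrow> (nat \<Rightarrow> complex) \<Rightarrow> (nat \<Rightarrow> complex) \<Rightarrow> bool" where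
  "phase_aligned N h w \<longleftrightarrow> (\<forall>n\<in>{1..N}. h n * w n = complex_of_real (cmod (h n) * cmod (w n)))"

lemma objective_phase_aligned:
  assumes "phase_aligned N h w"
  shows "objective N h w = (\<Sum>n=1..N. cmod (h n) * cmod (w n))\<^sup>2"
proof -
  have "(\<Sum>n=1..N. h n * w n) = complex_of_real (\<Sum>n=1..N. cmod (h n) * cmod (w n))"
    using assms by (simp add: phase_aligned_def of_real_sum)
  moreover have "0 \<le> (\<Sum>n=1..N. cmod (h n) * cmod (w n))" by (simp add: sum_nonneg)
  ultimately show ?thesis unfolding objective_def by (metis norm_of_real abs_of_nonneg)
qed

lemma objective_le_amplitude_sum:
  "objective N h v \<le> (\<Sum>n=1..N. cmod (h n) * cmod (v n))\<^sup>2"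
proof -
  have "cmod (\<Sum>n=1..N. h n * v n) \<le> (\<Sum>n=1..N. cmod (h n) * cmod (v n))"
    by (rule order_trans[OF norm_sum]) (simp add: norm_mult)
  then show ?thesis unfolding objective_def by (simp add: power_mono)
qed

lemma optimal_if_amplitudes_maximal:
  assumes "feasible Pant Ptot N w" and "phase_aligned N h w"
    and maximal: "\<And>y. \<forall>n\<in>{1..N}. 0 \<le> y n \<and> y n \<le> sqrt Pant \<Longrightarrow> (\<Sum>n=1..N. (y n)\<^sup>2) \<le> Ptot
        \<Longrightarrow> (\<Sum>n=1..N. cmod (h n) * y n) \<le> (\<Sum>n=1..N. cmod (h n) * cmod (w n))"
  shows "optimal Pant Ptot N h w"
  unfolding optimal_def
proof (intro conjI allI impI)
  fix v assume v: "feasible Pant Ptot N v"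
  then have "(\<Sum>n=1..N. cmod (h n) * cmod (v n)) \<le> (\<Sum>n=1..N. cmod (h n) * cmod (w n))"
    unfolding feasible_def by (intro maximal) (auto intro: real_le_rsqrt)
  then have "(\<Sum>n=1..N. cmod (h n) * cmod (v n))\<^sup>2 \<le> (\<Sum>n=1..N. cmod (h n) * cmod (w n))\<^sup>2"
    by (simp add: power_mono sum_nonneg)
  then show "objective N h v \<le> objective N h w"
    using objective_le_amplitude_sum objective_phase_aligned[OF assms(2)] by (metis order_trans)
qed fact

lemma optimal_full_power:
  assumes "phase_aligned N h w" and "0 \<le> Pant" and "real N * Pant \<le> Ptot"
    and full: "\<forall>n\<in>{1..N}. cmod (w n) = sqrt Pant"
  shows "optimal Pant Ptot N h w"
proof (rule optimal_if_amplitudes_maximal[OF _ assms(1)])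
  show "feasible Pant Ptot N w" using assms by (simp add: feasible_def)
  fix y assume "\<forall>n\<in>{1..N}. 0 \<le> y n \<and> y n \<le> sqrt Pant"
  then show "(\<Sum>n=1..N. cmod (h n) * y n) \<le> (\<Sum>n=1..N. cmod (h n) * cmod (w n))"
    using full by (intro sum_mono) (simp add: mult_left_mono)
qed

lemma optimal_waterfilling:
  assumes "phase_aligned N h w" and "0 \<le> Pant" and "l > 0"
    and level: "\<forall>n\<in>{1..N}. cmod (w n) = min (cmod (h n) / (2 * l)) (sqrt Pant)"
    and total: "(\<Sum>n=1..N. (cmod (w n))\<^sup>2) = Ptot"
  shows "optimal Pant Ptot N h w"
proof (rule optimal_if_amplitudes_maximal[OF _ assms(1)])
  have "(cmod (w n))\<^sup>2 \<le> Pant" if "n \<in> {1..N}" for n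
  proof -
    have "cmod (w n) \<le> sqrt Pant" using level that by simp
    then show ?thesis using \<open>0 \<le> Pant\<close> by (metis norm_ge_zero power_mono real_sqrt_pow2)
  qed
  then show "feasible Pant Ptot N w" using total by (simp add: feasible_def)
  fix y assume "\<forall>n\<in>{1..N}. 0 \<le> y n \<and> y n \<le> sqrt Pant" and "(\<Sum>n=1..N. (y n)\<^sup>2) \<le> Ptot"
  then show "(\<Sum>n=1..N. cmod (h n) * y n) \<le> (\<Sum>n=1..N. cmod (h n) * cmod (w n))"
    using level total \<open>l > 0\<close> by (intro clipped_maximizes_weighted_sum[where c = "sqrt Pant"]) auto
qed

lemma phase_aligned_rotation:
  fixes x :: real and z :: complex
  assumes "0 \<le> x"
  defines "w \<equiv> complex_of_real x * exp (- \<i> * complex_of_real (Arg z))"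
  shows "cmod w = x" and "z * w = complex_of_real (cmod z * cmod w)"
proof -
  show "cmod w = x" using assms by (simp add: norm_mult)
  have "z = complex_of_real (cmod z) * exp (\<i> * complex_of_real (Arg z))"
    by (metis rcis_cmod_Arg rcis_def cis_conv_exp)
  then have "z * w = complex_of_real (cmod z * x)
      * (exp (\<i> * complex_of_real (Arg z)) * exp (- \<i> * complex_of_real (Arg z)))"
    unfolding w_def by (metis (no_types, lifting) mult.assoc mult.left_commute of_real_mult)
  then show "z * w = complex_of_real (cmod z * cmod w)"
    using \<open>cmod w = x\<close> by (simp add: exp_add[symmetric])
qed

lemma phase_aligned_conjugate:
  fixes s :: "nat \<Rightarrow> real" and t :: real
  assumes "\<forall>n. 0 \<le> s n" and "0 \<le> t"
  shows "phase_aligned N h (\<lambda>n. cnj (h n) / complex_of_real (s n) * complex_of_real t)"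
  unfolding phase_aligned_def
proof
  fix n
  have "h n * cnj (h n) = complex_of_real ((cmod (h n))\<^sup>2)" by (metis complex_norm_square of_real_power)
  then have "h n * (cnj (h n) / complex_of_real (s n) * complex_of_real t)
      = complex_of_real ((cmod (h n))\<^sup>2 / s n * t)"
    by (metis of_real_divide of_real_mult times_divide_eq_right mult.assoc)
  moreover have "cmod (cnj (h n) / complex_of_real (s n) * complex_of_real t) = cmod (h n) / s n * t"
    using assms by (simp add: norm_mult norm_divide)
  ultimately show "h n * (cnj (h n) / complex_of_real (s n) * complex_of_real t)
      = complex_of_real (cmod (h n) * cmod (cnj (h n) / complex_of_real (s n) * complex_of_real t))"
    by (simp add: power2_eq_square)
qed

lemma Pfun_le_iff:
  assumes "0 < Pant" and "h (\<sigma> i) \<noteq> 0"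
  shows "Pfun Pant N h \<sigma> i \<le> Ptot \<longleftrightarrow>
    (\<Sum>l=1..<i. (cmod (h (\<sigma> l)))\<^sup>2) * Pant \<le> (cmod (h (\<sigma> i)))\<^sup>2 * (Ptot - (real N - real i + 1) * Pant)"
proof -
  define q where "q = (cmod (h (\<sigma> i)))\<^sup>2"
  have "0 < q" using assms(2) by (simp add: q_def)
  have "(2 * lam Pant h \<sigma> i)\<^sup>2 = q / Pant"
    unfolding lam_def q_def using assms by (simp add: power_divide power_mult_distrib)
  then have "Pfun Pant N h \<sigma> i = (\<Sum>l=1..<i. (cmod (h (\<sigma> l)))\<^sup>2) * Pant / q + (real N - real i + 1) * Pant"
    unfolding Pfun_def by simp
  then show ?thesis using \<open>0 < q\<close> by (simp add: q_def[symmetric] pos_divide_le_eq le_diff_eq[symmetric] mult.commute)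
qed

lemma istar_cases:
  obtains (all_full) "istar Pant Ptot N h \<sigma> = 1" and "1 \<le> N \<Longrightarrow> Pfun Pant N h \<sigma> 1 \<le> Ptot"
  | (level) j where "istar Pant Ptot N h \<sigma> = Suc j" and "1 \<le> j" and "j \<le> N"
      and "\<not> Pfun Pant N h \<sigma> j \<le> Ptot" and "Suc j \<le> N \<Longrightarrow> Pfun Pant N h \<sigma> (Suc j) \<le> Ptot"
proof (cases "\<exists>i\<in>{1..N}. Pfun Pant N h \<sigma> i \<le> Ptot")
  case True
  define m where "m = (LEAST i. i \<in> {1..N} \<and> Pfun Pant N h \<sigma> i \<le> Ptot)"
  have istar: "istar Pant Ptot N h \<sigma> = m" using True by (simp add: istar_def m_def)
  have m: "m \<in> {1..N}" "Pfun Pant N h \<sigma> m \<le> Ptot"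
    unfolding m_def by (metis (mono_tags, lifting) LeastI_ex True)+
  show ?thesis
  proof (cases "m = 1")
    case True
    then show ?thesis using all_full istar m by simp
  next
    case False
    then obtain j where j: "m = Suc j" "1 \<le> j" using m by (cases m) auto
    have "j < m" using j by simp
    then have "\<not> (j \<in> {1..N} \<and> Pfun Pant N h \<sigma> j \<le> Ptot)"
      unfolding m_def by (rule not_less_Least)
    then show ?thesis using level[of j] istar j m by auto
  qed
next
  case False
  then have istar: "istar Pant Ptot N h \<sigma> = Suc N" by (simp add: istar_def)
  show ?thesis
  proof (cases N)
    case 0
    then show ?thesis using all_full istar by simp
  next
    case (Suc k)
    then show ?thesis using level[of N] istar False by auto
  qed
qed

lemma istar_level_bounds:
  assumes "0 < Pant" and "0 < Ptot" and h_nz: "\<forall>l\<in>{1..N}. h (\<sigma> l) \<noteq> 0"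
    and j: "1 \<le> j" "j \<le> N"
    and not_j: "\<not> Pfun Pant N h \<sigma> j \<le> Ptot"
    and Suc_j: "Suc j \<le> N \<Longrightarrow> Pfun Pant N h \<sigma> (Suc j) \<le> Ptot"
  defines "S \<equiv> \<Sum>l=1..j. (cmod (h (\<sigma> l)))\<^sup>2"
    and "D \<equiv> Ptot - (real N - real j) * Pant"
  shows "0 < S" and "0 < D"
    and "(cmod (h (\<sigma> j)))\<^sup>2 * D \<le> S * Pant"
    and "Suc j \<le> N \<Longrightarrow> S * Pant \<le> (cmod (h (\<sigma> (Suc j))))\<^sup>2 * D"
proof -
  have pos: "0 < (cmod (h (\<sigma> l)))\<^sup>2" if "l \<in> {1..N}" for l
    using h_nz that by simp
  have "0 < (cmod (h (\<sigma> 1)))\<^sup>2" using pos j by simp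
  also have "\<dots> \<le> S" unfolding S_def using j by (intro member_le_sum) auto
  finally show "0 < S" .
  have S_split: "S = (\<Sum>l=1..<j. (cmod (h (\<sigma> l)))\<^sup>2) + (cmod (h (\<sigma> j)))\<^sup>2"
    unfolding S_def using j by (simp add: atLeastLessThanSuc_atLeastAtMost[symmetric])
  have jN: "j \<in> {1..N}" using j by simp
  have "\<not> (\<Sum>l=1..<j. (cmod (h (\<sigma> l)))\<^sup>2) * Pant
      \<le> (cmod (h (\<sigma> j)))\<^sup>2 * (Ptot - (real N - real j + 1) * Pant)"
    using not_j Pfun_le_iff[OF \<open>0 < Pant\<close>] h_nz jN by blast
  moreover have "Ptot - (real N - real j + 1) * Pant = D - Pant" by (simp add: D_def algebra_simps)
  ultimately have "(cmod (h (\<sigma> j)))\<^sup>2 * (D - Pant) < (\<Sum>l=1..<j. (cmod (h (\<sigma> l)))\<^sup>2) * Pant"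
    by (metis not_le)
  then show "(cmod (h (\<sigma> j)))\<^sup>2 * D \<le> S * Pant"
    unfolding S_split by (simp add: algebra_simps)
  show above: "S * Pant \<le> (cmod (h (\<sigma> (Suc j))))\<^sup>2 * D" if "Suc j \<le> N"
  proof -
    have "Suc j \<in> {1..N}" using that by simp
    then have "(\<Sum>l=1..<Suc j. (cmod (h (\<sigma> l)))\<^sup>2) * Pant
        \<le> (cmod (h (\<sigma> (Suc j))))\<^sup>2 * (Ptot - (real N - real (Suc j) + 1) * Pant)"
      using Suc_j[OF that] Pfun_le_iff[OF \<open>0 < Pant\<close>] h_nz by blast
    then show ?thesis by (simp add: S_def D_def atLeastLessThanSuc_atLeastAtMost)
  qed
  show "0 < D"
  proof (cases "Suc j \<le> N")
    case True
    have "0 < S * Pant" using \<open>0 < S\<close> \<open>0 < Pant\<close> by simp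
    also have "\<dots> \<le> (cmod (h (\<sigma> (Suc j))))\<^sup>2 * D" using above[OF True] .
    finally show ?thesis using pos[of "Suc j"] True by (simp add: zero_less_mult_iff)
  next
    case False
    then have "j = N" using j by simp
    then show ?thesis using \<open>0 < Ptot\<close> by (simp add: D_def)
  qed
qed

lemma lamstar_water_level:
  assumes "0 < Pant" and "0 < Ptot"
    and \<sigma>_bij: "bij_betw \<sigma> {1..N} {1..N}"
    and \<sigma>_sorted: "\<forall>i\<in>{1..N}. \<forall>l\<in>{1..N}. i \<le> l \<longrightarrow> cmod (h (\<sigma> i)) \<le> cmod (h (\<sigma> l))"
    and h_nz: "\<forall>l\<in>{1..N}. h (\<sigma> l) \<noteq> 0"
    and istar: "istar Pant Ptot N h \<sigma> = Suc j" and j: "1 \<le> j" "j \<le> N"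
    and not_j: "\<not> Pfun Pant N h \<sigma> j \<le> Ptot"
    and Suc_j: "Suc j \<le> N \<Longrightarrow> Pfun Pant N h \<sigma> (Suc j) \<le> Ptot"
  defines "L \<equiv> lamstar Pant Ptot N h \<sigma>"
  shows "0 < L" and "(\<Sum>n=1..N. (min (cmod (h n) / (2 * L)) (sqrt Pant))\<^sup>2) = Ptot"
proof -
  define S where "S = (\<Sum>l=1..j. (cmod (h (\<sigma> l)))\<^sup>2)"
  define D where "D = Ptot - (real N - real j) * Pant"
  note bounds = istar_level_bounds[OF assms(1,2) h_nz j not_j Suc_j, folded S_def D_def]
  have L: "L = sqrt (S / D) / 2"
    using istar by (simp add: L_def lamstar_def S_def D_def atLeastLessThanSuc_atLeastAtMost)
  show "0 < L" unfolding L using bounds(1,2) by simp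
  define \<mu> where "\<mu> = sqrt (D / S)"
  have level: "t / (2 * L) = t * \<mu>" for t
    using bounds(1,2) by (simp add: L \<mu>_def real_sqrt_divide)
  have scaled: "b * \<mu> \<le> sqrt Pant \<longleftrightarrow> b\<^sup>2 * D \<le> S * Pant"
    and scaled': "sqrt Pant \<le> b * \<mu> \<longleftrightarrow> S * Pant \<le> b\<^sup>2 * D" if "0 \<le> b" for b
    using that bounds(1,2) by (simp_all add: \<mu>_def mult_sqrt_eq_sqrt field_simps)
  have "(\<Sum>n=1..N. (min (cmod (h n) * \<mu>) (sqrt Pant))\<^sup>2)
      = (\<Sum>l=1..N. (min (cmod (h (\<sigma> l)) * \<mu>) (sqrt Pant))\<^sup>2)"
    using sum.reindex_bij_betw[OF \<sigma>_bij, of "\<lambda>n. (min (cmod (h n) * \<mu>) (sqrt Pant))\<^sup>2"] by simp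
  also have "\<dots> = \<mu>\<^sup>2 * S + real (N - j) * (sqrt Pant)\<^sup>2"
    unfolding S_def using bounds(1,2,3,4) \<sigma>_sorted j scaled scaled'
    by (intro sum_clipped_sorted) (simp_all add: \<mu>_def)
  also have "\<dots> = Ptot"
    using bounds(1,2) j \<open>0 < Pant\<close> by (simp add: \<mu>_def D_def)
  finally show "(\<Sum>n=1..N. (min (cmod (h n) / (2 * L)) (sqrt Pant))\<^sup>2) = Ptot"
    by (simp add: level)
qed

lemma wopt_phase_aligned:
  assumes "\<forall>n\<in>{1..N}. 0 \<le> xopt Pant Ptot N h \<sigma> n"
  shows "phase_aligned N h (wopt Pant Ptot N h \<sigma>)"
    and "\<forall>n\<in>{1..N}. cmod (wopt Pant Ptot N h \<sigma> n) = xopt Pant Ptot N h \<sigma> n"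
  using assms phase_aligned_rotation by (simp_all add: phase_aligned_def wopt_def)

lemma wopt_optimal:
  assumes h_nz: "\<forall>n\<in>{1..N}. h n \<noteq> 0" and "0 < Pant" and "0 < Ptot"
    and \<sigma>_bij: "bij_betw \<sigma> {1..N} {1..N}"
    and \<sigma>_sorted: "\<forall>i\<in>{1..N}. \<forall>j\<in>{1..N}. i \<le> j \<longrightarrow> cmod (h (\<sigma> i)) \<le> cmod (h (\<sigma> j))"
  shows "optimal Pant Ptot N h (wopt Pant Ptot N h \<sigma>)"
proof -
  have h\<sigma>_nz: "\<forall>l\<in>{1..N}. h (\<sigma> l) \<noteq> 0"
    using h_nz \<sigma>_bij by (auto simp: bij_betw_def)
  show ?thesis
  proof (cases rule: istar_cases[of Pant Ptot N h \<sigma>])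
    case all_full
    have "real N * Pant \<le> Ptot"
    proof (cases "N = 0")
      case False
      then have "Pfun Pant N h \<sigma> 1 \<le> Ptot" using all_full by simp
      then have "0 \<le> (cmod (h (\<sigma> 1)))\<^sup>2 * (Ptot - real N * Pant)"
        using Pfun_le_iff[OF \<open>0 < Pant\<close>] h\<sigma>_nz False by auto
      moreover have "0 < (cmod (h (\<sigma> 1)))\<^sup>2" using h\<sigma>_nz False by simp
      ultimately show ?thesis by (simp add: zero_le_mult_iff)
    qed (use \<open>0 < Ptot\<close> in simp)
    moreover have "\<forall>n. xopt Pant Ptot N h \<sigma> n = sqrt Pant" using all_full by (simp add: xopt_def)
    ultimately show ?thesis
      using wopt_phase_aligned[of N Pant Ptot h \<sigma>] \<open>0 < Pant\<close> by (intro optimal_full_power) auto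
  next
    case (level j)
    note water = lamstar_water_level[OF \<open>0 < Pant\<close> \<open>0 < Ptot\<close> \<sigma>_bij \<sigma>_sorted h\<sigma>_nz level]
    have x: "\<forall>n. xopt Pant Ptot N h \<sigma> n = min (cmod (h n) / (2 * lamstar Pant Ptot N h \<sigma>)) (sqrt Pant)"
      using level by (simp add: xopt_def)
    then have "\<forall>n. 0 \<le> xopt Pant Ptot N h \<sigma> n" using water(1) \<open>0 < Pant\<close> by simp
    then show ?thesis
      using wopt_phase_aligned[of N Pant Ptot h \<sigma>] water x \<open>0 < Pant\<close>
      by (intro optimal_waterfilling[where l = "lamstar Pant Ptot N h \<sigma>"]) auto
  qed
qed

lemma conjugate_full_power_optimal:
  assumes h_nz: "\<forall>n\<in>{1..N}. h n \<noteq> 0" and "0 < Pant" and "real N * Pant \<le> Ptot"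
  shows "optimal Pant Ptot N h (\<lambda>n. cnj (h n) / complex_of_real (cmod (h n)) * complex_of_real (sqrt Pant))"
  using assms phase_aligned_conjugate[of "\<lambda>n. cmod (h n)" "sqrt Pant"]
  by (intro optimal_full_power) (auto simp: norm_mult norm_divide)

lemma conjugate_beamformer_optimal:
  assumes h_nz: "\<forall>n\<in>{1..N}. h n \<noteq> 0" and "0 < Pant" and "0 < Ptot" and "Ptot \<le> Pant"
  shows "optimal Pant Ptot N h (\<lambda>n. cnj (h n) / complex_of_real (sqrt (\<Sum>m=1..N. (cmod (h m))\<^sup>2))
                                       * complex_of_real (sqrt Ptot))"
    (is "optimal _ _ _ _ ?w")
proof (cases "N = 0")
  case True
  then show ?thesis using \<open>0 < Ptot\<close> \<open>0 < Pant\<close> by (intro optimal_full_power) (simp_all add: phase_aligned_def)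
next
  case False
  define r where "r = sqrt (\<Sum>m=1..N. (cmod (h m))\<^sup>2)"
  have h_le_r: "cmod (h n) \<le> r" if "n \<in> {1..N}" for n
    unfolding r_def using that by (intro real_le_rsqrt member_le_sum) auto
  have "0 < cmod (h 1)" using h_nz False by simp
  also have "\<dots> \<le> r" using h_le_r[of 1] False by simp
  finally have "0 < r" .
  let ?v = "\<lambda>n. cnj (h n) / complex_of_real r * complex_of_real (sqrt Ptot)"
  have w: "?w = ?v" by (simp only: r_def)
  define l where "l = r / (2 * sqrt Ptot)"
  have "0 < l" using \<open>0 < r\<close> \<open>0 < Ptot\<close> by (simp add: l_def)
  have norm_v: "cmod (?v n) = cmod (h n) / (2 * l)" for n
    using \<open>0 < r\<close> \<open>0 < Ptot\<close> by (simp add: l_def norm_mult norm_divide)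
  have below_Pant: "cmod (h n) / (2 * l) \<le> sqrt Pant" if "n \<in> {1..N}" for n
  proof -
    have "cmod (h n) / (2 * l) \<le> sqrt Ptot"
      using h_le_r[OF that] \<open>0 < r\<close> \<open>0 < Ptot\<close> by (simp add: l_def field_simps)
    also have "\<dots> \<le> sqrt Pant" using \<open>Ptot \<le> Pant\<close> by simp
    finally show ?thesis .
  qed
  have level: "\<forall>n\<in>{1..N}. cmod (?v n) = min (cmod (h n) / (2 * l)) (sqrt Pant)"
    unfolding norm_v using below_Pant by simp
  have "(\<Sum>n=1..N. (cmod (?v n))\<^sup>2) = (\<Sum>n=1..N. (cmod (h n))\<^sup>2) * (Ptot / r\<^sup>2)"
    using \<open>0 < r\<close> \<open>0 < Ptot\<close>
    by (simp add: norm_mult norm_divide power_mult_distrib power_divide sum_distrib_right sum_divide_distrib)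
  also have "\<dots> = Ptot" using \<open>0 < r\<close> by (simp add: r_def sum_nonneg)
  finally have "(\<Sum>n=1..N. (cmod (?v n))\<^sup>2) = Ptot" .
  moreover have "phase_aligned N h ?v"
    using phase_aligned_conjugate[of "\<lambda>_. r" "sqrt Ptot"] \<open>0 < r\<close> \<open>0 < Ptot\<close> by simp
  ultimately show ?thesis
    unfolding w using level \<open>0 < l\<close> \<open>0 < Pant\<close> by (intro optimal_waterfilling) auto
qed

theorem mainTheorem3:
  fixes N :: nat and h :: "nat \<Rightarrow> complex" and Pant Ptot :: real
    and \<sigma> :: "nat \<Rightarrow> nat"
  assumes h_nz: "\<forall>n\<in>{1..N}. h n \<noteq> 0"
    and Pant_pos: "Pant > 0" and Ptot_pos: "Ptot > 0"
    and \<sigma>_bij: "bij_betw \<sigma> {1..N} {1..N}"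
    and \<sigma>_sorted: "\<forall>i\<in>{1..N}. \<forall>j\<in>{1..N}. i \<le> j \<longrightarrow> cmod (h (\<sigma> i)) \<le> cmod (h (\<sigma> j))"
  shows "optimal Pant Ptot N h (wopt Pant Ptot N h \<sigma>)
    \<and> (Ptot \<ge> real N * Pant \<longrightarrow>
         optimal Pant Ptot N h (\<lambda>n. cnj (h n) / complex_of_real (cmod (h n)) * complex_of_real (sqrt Pant)))
    \<and> (Ptot \<le> Pant \<longrightarrow>
         optimal Pant Ptot N h (\<lambda>n. cnj (h n) / complex_of_real (sqrt (\<Sum>m=1..N. (cmod (h m))\<^sup>2))
                                       * complex_of_real (sqrt Ptot)))"
  using wopt_optimal[OF assms] conjugate_full_power_optimal[OF h_nz Pant_pos]
    conjugate_beamformer_optimal[OF h_nz Pant_pos Ptot_pos] by blast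

end
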